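(* Let $f:X\to Y$ with $X=\mathbb{R}^d$, $Y=\mathbb{R}^{|C|}$ decompose as $f=h\circ\phi$ with $\phi:X\to Z$, $h:Z\to Y$, $Z=\mathbb{R}^{d'}$. Let $r_{map}:Z\to\mathbb{R}^p$ be affine, and for each $con\in Concepts$ let $q_{con}\in\mathbb{R}^p$. Define $rep(con):=\lambda x.\ \cos(r_{map}(\phi(x)),q_{con})$ and $\widehat{rep}(con):=\lambda z.\ \cos(r_{map}(z),q_{con})$. Let $e$ be any $\texttt{Con}_{\texttt{spec}}$ specification and $B\subseteq X$. Then for every $v'\in\phi(B)$ and every $v\in\phi^{-1}(v')=\{v\in X\mid \phi(v)=v'\}$, $$[\![e]\!](h,v',\widehat{rep})=[\![e]\!](f,v,rep).$$
   Context: $C$ is a finite set of class labels and $Concepts$ a finite set of concept names; $\phi(B)=\{\phi(x)\mid x\in B\}$. $\texttt{Con}_{\texttt{spec}}$ expressions are generated by $E::= \texttt{>}(x,con_1,con_2)\mid predict(x,c)\mid \neg E\mid E\wedge E\mid E\vee E$ with $con_1,con_2\in Concepts$, $c\in C$. For $F:W\to\mathbb{R}^{|C|}$, $v\in W$, and $\rho$ assigning to each concept a function $W\to\mathbb{R}$: $[\![\texttt{>}(x,con_1,con_2)]\!](F,v,\rho):=\rho(con_1)(v)>\rho(con_2)(v)$; $[\![predict(x,c)]\!](F,v,\rho):=(\arg\max F(v)=\{c\})$; the connectives $\neg,\wedge,\vee$ are interpreted classically. $\cos(a,b)=\frac{a\cdot b}{\|a\|\|b\|}$. *)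

theory Defs
  imports "HOL-Analysis.Analysis"
begin

text \<open>The variable x is a fixed placeholder
and carries no information, so it is omitted from the syntax.\<close>

datatype ('con, 'c) conspec =
    Gt 'con 'con
  | Predict 'c
  | Neg "('con, 'c) conspec"
  | Conj "('con, 'c) conspec" "('con, 'c) conspec"
  | Disj "('con, 'c) conspec" "('con, 'c) conspec"

definition argmax_set :: "real ^ 'c::finite \<Rightarrow> 'c set" where
  "argmax_set y = {c. \<forall>c'. y $ c' \<le> y $ c}"

fun sem :: "('con::finite, 'c::finite) conspec \<Rightarrow> ('w \<Rightarrow> real ^ 'c) \<Rightarrow> 'w
            \<Rightarrow> ('con \<Rightarrow> 'w \<Rightarrow> real) \<Rightarrow> bool" where
  "sem (Gt con1 con2) F v \<rho> = (\<rho> con1 v > \<rho> con2 v)"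
| "sem (Predict c) F v \<rho> = (argmax_set (F v) = {c})"
| "sem (Neg e) F v \<rho> = (\<not> sem e F v \<rho>)"
| "sem (Conj e1 e2) F v \<rho> = (sem e1 F v \<rho> \<and> sem e2 F v \<rho>)"
| "sem (Disj e1 e2) F v \<rho> = (sem e1 F v \<rho> \<or> sem e2 F v \<rho>)"

definition cos_sim :: "'a::real_inner \<Rightarrow> 'a \<Rightarrow> real" where
  "cos_sim a b = (a \<bullet> b) / (norm a * norm b)"

definition affine_map :: "(real ^ 'n \<Rightarrow> real ^ 'm) \<Rightarrow> bool" where
  "affine_map r \<longleftrightarrow> (\<exists>(A :: real ^ 'n ^ 'm) b. \<forall>z. r z = A *v z + b)"

end

theory Submission
  imports Defs
begin

lemma sem_pullback:
  "sem e (F \<circ> \<phi>) v (\<lambda>con. \<rho> con \<circ> \<phi>) = sem e F (\<phi> v) \<rho>"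
  by (induction e) auto

theorem lemma2:
  fixes f :: "real ^ 'd \<Rightarrow> real ^ 'c::finite"
    and \<phi> :: "real ^ 'd \<Rightarrow> real ^ 'd2"
    and h :: "real ^ 'd2 \<Rightarrow> real ^ 'c"
    and rmap :: "real ^ 'd2 \<Rightarrow> real ^ 'p"
    and q :: "'con::finite \<Rightarrow> real ^ 'p"
    and e :: "('con, 'c) conspec"
    and B :: "(real ^ 'd) set"
    and v' :: "real ^ 'd2" and v :: "real ^ 'd"
  assumes "f = h \<circ> \<phi>"
    and "affine_map rmap"
    and "v' \<in> \<phi> ` B"
    and "v \<in> \<phi> -` {v'}"
  shows "sem e h v' (\<lambda>con z. cos_sim (rmap z) (q con))
       = sem e f v (\<lambda>con x. cos_sim (rmap (\<phi> x)) (q con))"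
proof -
  have "\<phi> v = v'"
    using assms(4) by simp
  then show ?thesis
    using sem_pullback[of e h \<phi> v "\<lambda>con z. cos_sim (rmap z) (q con)"] assms(1)
    by (simp add: comp_def)
qed

end
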